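(* Let $r \ge 0$ be an integer and let $G$ be a finite simple graph with at least $3$ vertices such that $\delta(G) \ge (r+1)\widetilde{\alpha}(G) + 3r$. Then $G$ contains $r+1$ pairwise edge-disjoint Hamilton cycles.
   Context: $\delta(G)$ denotes the minimum degree of $G$. For disjoint vertex sets $S,T$, $E(S,T)$ is the set of edges with one end in $S$ and one in $T$. An $(s,t)$-bipartite-hole in $G$ consists of two disjoint sets of vertices $S$ and $T$ with $|S|=s$, $|T|=t$ and $E(S,T)=\emptyset$. The bipartite-hole-number $\widetilde{\alpha}(G)$ is the least integer $r'$ which can be written as $r'=s+t-1$ for some positive integers $s,t$ such that $G$ contains no $(s,t)$-bipartite-hole. *)

theory Defs
  imports Main
begin

definition simple_graph :: "'a set \<Rightarrow> ('a \<Rightarrow> 'a \<Rightarrow> bool) \<Rightarrow> bool" where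
  "simple_graph V E \<longleftrightarrow> finite V \<and> (\<forall>x y. E x y \<longrightarrow> x \<in> V \<and> y \<in> V)
     \<and> (\<forall>x y. E x y \<longrightarrow> E y x) \<and> (\<forall>x. \<not> E x x)"

definition degree :: "'a set \<Rightarrow> ('a \<Rightarrow> 'a \<Rightarrow> bool) \<Rightarrow> 'a \<Rightarrow> nat" where
  "degree V E v = card {u \<in> V. E v u}"

text \<open>Minimum degree (for nonempty V).\<close>
definition min_degree :: "'a set \<Rightarrow> ('a \<Rightarrow> 'a \<Rightarrow> bool) \<Rightarrow> nat" where
  "min_degree V E = Min (degree V E ` V)"

definition has_bip_hole :: "'a set \<Rightarrow> ('a \<Rightarrow> 'a \<Rightarrow> bool) \<Rightarrow> nat \<Rightarrow> nat \<Rightarrow> bool" where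
  "has_bip_hole V E s t \<longleftrightarrow> (\<exists>S T. S \<subseteq> V \<and> T \<subseteq> V \<and> S \<inter> T = {} \<and>
      card S = s \<and> card T = t \<and> (\<forall>x\<in>S. \<forall>y\<in>T. \<not> E x y))"

definition bip_hole_number :: "'a set \<Rightarrow> ('a \<Rightarrow> 'a \<Rightarrow> bool) \<Rightarrow> nat" where
  "bip_hole_number V E = (LEAST r'. \<exists>s t. s \<ge> 1 \<and> t \<ge> 1 \<and> r' = s + t - 1 \<and>
      \<not> has_bip_hole V E s t)"

definition hamilton_cycle :: "'a set \<Rightarrow> ('a \<Rightarrow> 'a \<Rightarrow> bool) \<Rightarrow> 'a list \<Rightarrow> bool" where
  "hamilton_cycle V E xs \<longleftrightarrow> distinct xs \<and> set xs = V \<and> length xs \<ge> 3 \<and>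
     (\<forall>i < length xs. E (xs ! i) (xs ! ((i + 1) mod length xs)))"

definition cycle_edges :: "'a list \<Rightarrow> 'a set set" where
  "cycle_edges xs = {{xs ! i, xs ! ((i + 1) mod length xs)} | i. i < length xs}"

end

theory Submission
  imports Defs
begin

text \<open>A graph on at least three vertices whose minimum degree is at least its
  bipartite-hole-number \<open>\<alpha>\<close> is Hamiltonian (McDiarmid and Yolov): if a longest cycle \<open>C\<close>
  misses a vertex, let \<open>H\<close> be the component of \<open>G - C\<close> containing it and \<open>N\<close> the set of
  neighbours of \<open>H\<close> on \<open>C\<close>. Maximality of \<open>C\<close> makes the successors on \<open>C\<close> of the vertices
  of \<open>N\<close> independent and non-adjacent to \<open>H\<close>, and counting the degrees of a vertex of \<open>H\<close> and
  of a vertex of \<open>C\<close> outside \<open>N\<close> yields an \<open>(s,t)\<close>-bipartite hole for the pair with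
  \<open>s + t - 1 = \<alpha>\<close> that has none.
  Deleting the edges of \<open>k \<le> r\<close> Hamilton cycles lowers every degree by at most \<open>2k\<close> and turns
  an absent \<open>(s,t)\<close>-hole, \<open>s \<le> t\<close>, into an absent \<open>(s, t + 2ks)\<close>-hole, so the remaining graph
  \<open>G'\<close> satisfies \<open>\<alpha>(G') \<le> (k + 1) \<alpha>(G) + k \<le> \<delta>(G) - 2k \<le> \<delta>(G')\<close> and has a further
  Hamilton cycle.\<close>

lemma simple_graphD:
  assumes "simple_graph V E"
  shows "finite V" and "E x y \<Longrightarrow> x \<in> V" and "E x y \<Longrightarrow> y \<in> V" and "symp E" and "\<not> E x x"
  using assms unfolding simple_graph_def symp_def by blast+

definition cyclically :: "('a \<Rightarrow> 'a \<Rightarrow> bool) \<Rightarrow> 'a list \<Rightarrow> bool" where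
  "cyclically E xs \<longleftrightarrow> (\<forall>i < length xs. E (xs ! i) (xs ! ((i + 1) mod length xs)))"

lemma hamilton_cycle_iff:
  "hamilton_cycle V E xs \<longleftrightarrow> distinct xs \<and> set xs = V \<and> 3 \<le> length xs \<and> cyclically E xs"
  unfolding hamilton_cycle_def cyclically_def by blast

lemma cyclically_iff_successively:
  assumes "xs \<noteq> []"
  shows "cyclically E xs \<longleftrightarrow> successively E xs \<and> E (last xs) (hd xs)"
proof -
  have split: "(\<forall>i < length xs. P i) \<longleftrightarrow> (\<forall>i. Suc i < length xs \<longrightarrow> P i) \<and> P (length xs - 1)" for P
  proof -
    have "i < length xs \<longleftrightarrow> Suc i < length xs \<or> i = length xs - 1" for i
      using assms by (cases xs) auto
    then show ?thesis by metis
  qed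
  show ?thesis
    unfolding cyclically_def split using assms
    by (simp add: successively_conv_nth last_conv_nth hd_conv_nth)
qed

lemma cyclically_rotate:
  assumes "cyclically E xs"
  shows "cyclically E (rotate k xs)"
  unfolding cyclically_def
proof (intro allI impI)
  fix i assume i: "i < length (rotate k xs)"
  have n: "length xs > 0" using i by (cases xs) auto
  have "rotate k xs ! i = xs ! ((k + i) mod length xs)"
    using i by (simp add: nth_rotate)
  moreover have "rotate k xs ! ((i + 1) mod length (rotate k xs)) = xs ! (((k + i) mod length xs + 1) mod length xs)"
    using n by (simp add: nth_rotate mod_Suc_eq mod_add_right_eq)
  ultimately show "E (rotate k xs ! i) (rotate k xs ! ((i + 1) mod length (rotate k xs)))"
    using assms n unfolding cyclically_def by simp
qed

definition walk :: "('a \<Rightarrow> 'a \<Rightarrow> bool) \<Rightarrow> 'a set \<Rightarrow> 'a list \<Rightarrow> bool" where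
  "walk E W xs \<longleftrightarrow> xs \<noteq> [] \<and> set xs \<subseteq> W \<and> successively E xs"

lemma successively_rev_symp:
  assumes "symp E"
  shows "successively E (rev xs) \<longleftrightarrow> successively E xs"
proof -
  have "(\<lambda>x y. E y x) = E" using assms by (auto simp: symp_def)
  then show ?thesis by (simp only: successively_rev)
qed

lemma walk_imp_distinct_walk:
  assumes "walk E W xs"
  shows "\<exists>ys. walk E W ys \<and> distinct ys \<and> hd ys = hd xs \<and> last ys = last xs"
  using assms
proof (induction "length xs" arbitrary: xs rule: less_induct)
  case less
  show ?case
  proof (cases "distinct xs")
    case True
    then show ?thesis using less by blast
  next
    case False
    then obtain a b c y where xs: "xs = a @ [y] @ b @ [y] @ c"
      using not_distinct_decomp by blast
    have "successively E ((a @ [y] @ b) @ ([y] @ c))"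
      using less(2) unfolding xs walk_def by simp
    then have "successively E ((a @ [y]) @ b)" and "successively E ([y] @ c)"
      unfolding successively_append_iff by auto
    then have "successively E ((a @ [y]) @ c)"
      unfolding successively_append_iff by (cases c) auto
    then have "walk E W (a @ [y] @ c)"
      using less(2) unfolding xs walk_def by auto
    moreover have "hd (a @ [y] @ c) = hd xs" "last (a @ [y] @ c) = last xs"
      using xs by (cases a; cases c; simp)+
    ultimately show ?thesis
      using less(1)[of "a @ [y] @ c"] xs by auto
  qed
qed

lemma walk_join_at_hd:
  assumes "symp E" "walk E W p" "walk E W q" "hd p = hd q"
  shows "\<exists>pq. walk E W pq \<and> hd pq = last p \<and> last pq = last q"
proof -
  obtain v q' where q: "q = v # q'"
    using assms(3) unfolding walk_def by (cases q) auto
  have rev_p: "walk E W (rev p)"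
    using assms(2) successively_rev_symp[OF assms(1)] unfolding walk_def by auto
  show ?thesis
  proof (cases "q' = []")
    case True
    then show ?thesis
      using rev_p assms(2,4) q unfolding walk_def by (intro exI[of _ "rev p"]) (auto simp: hd_rev last_rev)
  next
    case False
    have "walk E W (rev p @ q')"
      using assms(2-4) rev_p q False unfolding walk_def
      by (auto simp: successively_append_iff successively_Cons last_rev)
    then show ?thesis
      using assms(2) q False unfolding walk_def by (intro exI[of _ "rev p @ q'"]) (auto simp: hd_rev)
  qed
qed

lemma last_rotate_conv_nth:
  assumes "xs \<noteq> []"
  shows "last (rotate n xs) = xs ! ((n + (length xs - 1)) mod length xs)"
  using assms by (simp add: last_conv_nth nth_rotate)

lemma rotate_after_index:
  assumes "cyclically E c" "i < length c"
  shows "successively E (rotate (i + 1) c)"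
    and "hd (rotate (i + 1) c) = c ! ((i + 1) mod length c)"
    and "last (rotate (i + 1) c) = c ! i"
proof -
  have c: "c \<noteq> []" using assms(2) by auto
  have "rotate (i + 1) c \<noteq> []" using c by simp
  then show "successively E (rotate (i + 1) c)"
    using cyclically_iff_successively cyclically_rotate[OF assms(1)] by blast
  show "hd (rotate (i + 1) c) = c ! ((i + 1) mod length c)"
    using c by (simp add: hd_rotate_conv_nth del: rotate_Suc)
  have "i + 1 + (length c - 1) = length c + i"
    using assms(2) by simp
  then have "(i + 1 + (length c - 1)) mod length c = i"
    using assms(2) by simp
  then show "last (rotate (i + 1) c) = c ! i"
    using c by (simp add: last_rotate_conv_nth del: rotate_Suc)
qed

lemma cycle_split_at:
  assumes "cyclically E c" "distinct c" "i < length c" "j < length c" "i \<noteq> j"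
  obtains a b where "successively E (a @ b)" "distinct (a @ b)" "set (a @ b) = set c"
    "a \<noteq> []" "b \<noteq> []" "hd a = c ! ((i + 1) mod length c)" "last a = c ! j"
    "hd b = c ! ((j + 1) mod length c)" "last b = c ! i"
proof -
  define m where "m = length c"
  define r where "r = rotate (i + 1) c"
  define k where "k = (j + m - (i + 1)) mod m"
  have m: "0 < m" "length r = m" using assms(3) unfolding m_def r_def by auto
  note r = rotate_after_index[OF assms(1,3), folded r_def m_def]
  have r_nth: "r ! n = c ! ((i + 1 + n) mod m)" if "n < m" for n
    using that unfolding r_def m_def by (simp add: nth_rotate del: rotate_Suc)
  have "(i + 1 + k) mod m = (i + 1 + (j + m - (i + 1))) mod m"
    unfolding k_def by (metis mod_add_right_eq)
  also have "i + 1 + (j + m - (i + 1)) = m + j"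
    using assms(3) unfolding m_def by simp
  finally have ik: "(i + 1 + k) mod m = j"
    using assms(4) unfolding m_def by simp
  have "k < m" using m k_def by simp
  then have rk: "r ! k = c ! j" using r_nth ik by simp
  have "k + 1 < m"
  proof (rule ccontr)
    assume "\<not> k + 1 < m"
    then have "k = length r - 1" using \<open>k < m\<close> m by simp
    then have "r ! k = last r" using m by (metis last_conv_nth length_greater_0_conv)
    then have "c ! j = c ! i" using rk r(3) by simp
    then show False using assms(2-5) nth_eq_iff_index_eq by blast
  qed
  have "(i + 1 + (k + 1)) mod m = ((i + 1 + k) mod m + 1) mod m"
    by (simp add: mod_Suc_eq)
  then have "r ! (k + 1) = c ! ((j + 1) mod m)" using r_nth[OF \<open>k + 1 < m\<close>] ik by simp
  then have hd_b: "hd (drop (k + 1) r) = c ! ((j + 1) mod m)"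
    using \<open>k + 1 < m\<close> m by (simp add: hd_drop_conv_nth)
  have last_a: "last (take (k + 1) r) = c ! j"
    using \<open>k + 1 < m\<close> m rk by (simp add: take_Suc_conv_app_nth)
  have "set r = set c" "distinct r" using assms(2) unfolding r_def by auto
  moreover have "take (k + 1) r \<noteq> []" "drop (k + 1) r \<noteq> []"
    using \<open>k + 1 < m\<close> m by auto
  moreover have "hd (take (k + 1) r) = hd r" "last (drop (k + 1) r) = last r"
    using \<open>k + 1 < m\<close> m by auto
  ultimately show ?thesis
    using that[of "take (k + 1) r" "drop (k + 1) r"] r hd_b last_a unfolding m_def by simp
qed

definition longest_cycle :: "'a set \<Rightarrow> ('a \<Rightarrow> 'a \<Rightarrow> bool) \<Rightarrow> 'a list \<Rightarrow> bool" where
  "longest_cycle V E c \<longleftrightarrow> cyclically E c \<and> distinct c \<and> set c \<subseteq> V \<and>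
     (\<forall>c'. cyclically E c' \<and> distinct c' \<and> set c' \<subseteq> V \<longrightarrow> length c' \<le> length c)"

lemma longest_cycle_exists:
  assumes "finite V"
  shows "\<exists>c. longest_cycle V E c"
proof -
  let ?P = "\<lambda>c. cyclically E c \<and> distinct c \<and> set c \<subseteq> V"
  have "length c < card V + 1" if "?P c" for c
    using that assms card_mono distinct_card by (metis less_Suc_eq_le Suc_eq_plus1)
  moreover have "?P []" by (simp add: cyclically_def)
  ultimately show ?thesis
    unfolding longest_cycle_def using Lattices_Big.ex_has_greatest_nat[of ?P "[]" length] by blast
qed

lemma longest_cycle_not_extendable:
  assumes "longest_cycle V E c" "q \<noteq> []" "set q \<subseteq> V - set c" "distinct q"
    "cyclically E c'" "distinct c'" "set c' = set c \<union> set q"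
  shows False
proof -
  have "length c' = card (set c \<union> set q)" using assms(6,7) distinct_card by metis
  also have "\<dots> = length c + length q"
    using assms(1,3,4) distinct_card card_Un_disjoint unfolding longest_cycle_def
    by (metis Diff_disjoint List.finite_set disjoint_iff subset_iff)
  finally have "length c < length c'" using assms(2) by simp
  moreover have "set c' \<subseteq> V" using assms(1,3,7) unfolding longest_cycle_def by auto
  ultimately show False using assms(1,5,6) unfolding longest_cycle_def by fastforce
qed

lemma longest_cycle_no_detour:
  assumes "longest_cycle V E c" "walk E (V - set c) q" "i < length c" "E (c ! i) (hd q)"
  shows "\<not> E (last q) (c ! ((i + 1) mod length c))"
proof
  assume return_edge: "E (last q) (c ! ((i + 1) mod length c))"
  obtain p where p: "walk E (V - set c) p" "distinct p" "hd p = hd q" "last p = last q"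
    using walk_imp_distinct_walk[OF assms(2)] by blast
  have c: "cyclically E c" "distinct c" using assms(1) unfolding longest_cycle_def by auto
  define r where "r = rotate (i + 1) c"
  note r = rotate_after_index[OF c(1) assms(3), folded r_def]
  have "r \<noteq> []" "set r = set c" "distinct r" using assms(3) c(2) unfolding r_def by auto
  then have "cyclically E (r @ p)" "distinct (r @ p)" "set (r @ p) = set c \<union> set p"
    using r p assms(4) return_edge unfolding walk_def
    by (auto simp: cyclically_iff_successively successively_append_iff)
  then show False
    using longest_cycle_not_extendable[OF assms(1)] p(1,2) unfolding walk_def by blast
qed

lemma longest_cycle_no_crossing_detour:
  assumes "symp E" "longest_cycle V E c" "walk E (V - set c) q"
    "i < length c" "j < length c" "i \<noteq> j" "E (c ! i) (hd q)" "E (last q) (c ! j)"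
  shows "\<not> E (c ! ((i + 1) mod length c)) (c ! ((j + 1) mod length c))"
proof
  assume cross: "E (c ! ((i + 1) mod length c)) (c ! ((j + 1) mod length c))"
  obtain p where p: "walk E (V - set c) p" "distinct p" "hd p = hd q" "last p = last q"
    using walk_imp_distinct_walk[OF assms(3)] by blast
  have c: "cyclically E c" "distinct c" using assms(2) unfolding longest_cycle_def by auto
  obtain a b where ab: "successively E (a @ b)" "distinct (a @ b)" "set (a @ b) = set c"
    "a \<noteq> []" "b \<noteq> []" "hd a = c ! ((i + 1) mod length c)" "last a = c ! j"
    "hd b = c ! ((j + 1) mod length c)" "last b = c ! i"
    using cycle_split_at[OF c assms(4-6)] by blast
  have "successively E (rev a)" "successively E b" "E (last (rev a)) (hd b)"
    using ab(1,6,8) cross successively_rev_symp[OF assms(1)]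
    by (auto simp: successively_append_iff last_rev)
  moreover have "E (last b) (hd p)" "E (last p) (hd (rev a))"
    using ab(4,7,9) assms(7,8) p(3,4) by (auto simp: hd_rev)
  ultimately have "cyclically E (p @ rev a @ b)"
    using p(1) ab(4,5) unfolding walk_def
    by (auto simp: cyclically_iff_successively successively_append_iff)
  moreover have "distinct (p @ rev a @ b)" "set (p @ rev a @ b) = set c \<union> set p"
    using p ab(2,3) unfolding walk_def by auto
  ultimately show False
    using longest_cycle_not_extendable[OF assms(2)] p(1,2) unfolding walk_def by blast
qed

definition reachable :: "('a \<Rightarrow> 'a \<Rightarrow> bool) \<Rightarrow> 'a set \<Rightarrow> 'a \<Rightarrow> 'a set" where
  "reachable E W v = {x. \<exists>p. walk E W p \<and> hd p = v \<and> last p = x}"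

lemma reachable_subset: "reachable E W v \<subseteq> W"
  unfolding reachable_def walk_def by auto

lemma start_reachable: "v \<in> W \<Longrightarrow> v \<in> reachable E W v"
  unfolding reachable_def walk_def by (intro CollectI exI[of _ "[v]"]) auto

lemma reachable_step:
  assumes "x \<in> reachable E W v" "y \<in> W" "E x y"
  shows "y \<in> reachable E W v"
proof -
  obtain p where "walk E W p" "hd p = v" "last p = x"
    using assms(1) unfolding reachable_def by blast
  then have "walk E W (p @ [y]) \<and> hd (p @ [y]) = v \<and> last (p @ [y]) = y"
    using assms(2,3) unfolding walk_def by (auto simp: successively_append_iff)
  then show ?thesis unfolding reachable_def by blast
qed

lemma walk_between_reachable:
  assumes "symp E" "x \<in> reachable E W v" "y \<in> reachable E W v"
  shows "\<exists>q. walk E W q \<and> hd q = x \<and> last q = y"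
  using assms walk_join_at_hd[OF assms(1)] unfolding reachable_def by fastforce

lemma longest_cycle_attachment_successors:
  assumes G: "simple_graph V E" and c: "longest_cycle V E c"
    and x: "x \<in> reachable E (V - set c) v" and y: "y \<in> reachable E (V - set c) v"
    and i: "i < length c" "E x (c ! i)"
  shows "\<not> E y (c ! ((i + 1) mod length c))"
    and "j < length c \<Longrightarrow> E y (c ! j) \<Longrightarrow> \<not> E (c ! ((i + 1) mod length c)) (c ! ((j + 1) mod length c))"
proof -
  have sym: "symp E" using G by (rule simple_graphD)
  obtain q where q: "walk E (V - set c) q" "hd q = x" "last q = y"
    using walk_between_reachable[OF sym x y] by blast
  have "E (c ! i) (hd q)" using i(2) q(2) sym by (simp add: symp_def)
  then show "\<not> E y (c ! ((i + 1) mod length c))"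
    using longest_cycle_no_detour[OF c q(1) i(1)] q(3) by simp
  show "\<not> E (c ! ((i + 1) mod length c)) (c ! ((j + 1) mod length c))"
    if j: "j < length c" "E y (c ! j)"
  proof (cases "i = j")
    case True
    then show ?thesis using G by (simp add: simple_graphD)
  next
    case False
    show ?thesis
      using longest_cycle_no_crossing_detour[OF sym c q(1) i(1) j(1) False] \<open>E (c ! i) (hd q)\<close> j(2) q(3)
      by simp
  qed
qed

lemma has_bip_hole_sym:
  assumes "symp E" "has_bip_hole V E s t"
  shows "has_bip_hole V E t s"
proof -
  obtain S T where "S \<subseteq> V" "T \<subseteq> V" "S \<inter> T = {}" "card S = s" "card T = t"
    "\<forall>x\<in>S. \<forall>y\<in>T. \<not> E x y"
    using assms(2) unfolding has_bip_hole_def by blast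
  then have "T \<subseteq> V \<and> S \<subseteq> V \<and> T \<inter> S = {} \<and> card T = t \<and> card S = s \<and> (\<forall>x\<in>T. \<forall>y\<in>S. \<not> E x y)"
    using assms(1) unfolding symp_def by blast
  then show ?thesis unfolding has_bip_hole_def by blast
qed

lemma has_bip_holeI:
  assumes "X \<subseteq> V" "Y \<subseteq> V" "X \<inter> Y = {}" "s \<le> card X" "t \<le> card Y"
    "\<forall>x\<in>X. \<forall>y\<in>Y. \<not> E x y"
  shows "has_bip_hole V E s t"
proof -
  obtain S where S: "S \<subseteq> X" "card S = s"
    using obtain_subset_with_card_n[OF assms(4)] by metis
  obtain T where T: "T \<subseteq> Y" "card T = t"
    using obtain_subset_with_card_n[OF assms(5)] by metis
  have "S \<subseteq> V \<and> T \<subseteq> V \<and> S \<inter> T = {} \<and> card S = s \<and> card T = t \<and> (\<forall>x\<in>S. \<forall>y\<in>T. \<not> E x y)"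
    using S T assms(1-3,6) by blast
  then show ?thesis unfolding has_bip_hole_def by blast
qed

lemma has_bip_holeI_independent:
  assumes "finite X" "finite Y" "X \<subseteq> V" "Y \<subseteq> V" "X \<inter> Y = {}"
    "\<forall>x\<in>X. \<forall>y\<in>X \<union> Y. \<not> E x y" "s \<le> card X" "s + t \<le> card X + card Y"
  shows "has_bip_hole V E s t"
proof -
  obtain S where S: "S \<subseteq> X" "card S = s"
    using obtain_subset_with_card_n[OF assms(7)] by metis
  have "card ((X - S) \<union> Y) = card (X - S) + card Y"
    using assms(1,2,5) by (intro card_Un_disjoint) auto
  also have "card (X - S) = card X - s"
    using S assms(1) finite_subset by (metis card_Diff_subset)
  finally have "t \<le> card ((X - S) \<union> Y)" using assms(7,8) by simp
  moreover have "\<forall>x\<in>S. \<forall>y\<in>(X - S) \<union> Y. \<not> E x y" using S(1) assms(6) by blast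
  ultimately show ?thesis
    using S assms(3-5) by (intro has_bip_holeI[of S V "(X - S) \<union> Y"]) auto
qed

text \<open>Used with \<open>H\<close> a component outside a longest cycle, \<open>N\<close> its neighbours on the cycle
  and \<open>M\<close> their successors along it.\<close>

lemma has_bip_hole_around:
  assumes G: "simple_graph V E" and deg: "\<forall>x\<in>V. s + t - 1 \<le> degree V E x"
    and H: "H \<subseteq> V" "H \<noteq> {}" and N: "N \<subseteq> V - H" "V - H - N \<noteq> {}"
    and sep: "\<forall>x\<in>H. \<forall>y\<in>V - H - N. \<not> E x y"
    and M: "M \<subseteq> V - H - N" "card M = card N" "\<forall>x\<in>M. \<forall>y\<in>M. \<not> E x y"
  shows "has_bip_hole V E s t"
proof -
  have fin: "finite V" and sym: "symp E" and irr: "\<And>x. \<not> E x x"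
    using G by (simp_all add: simple_graphD)
  have fin_H: "finite H" and fin_N: "finite N" and fin_M: "finite M"
    using H(1) N(1) M(1) fin finite_subset by blast+
  obtain v where v: "v \<in> H" using H(2) by blast
  have "{u \<in> V. E v u} \<subseteq> (H - {v}) \<union> N"
    using sep v irr by blast
  then have "card {u \<in> V. E v u} \<le> card ((H - {v}) \<union> N)"
    using fin_H fin_N by (intro card_mono) auto
  also have "\<dots> \<le> card (H - {v}) + card N" by (rule card_Un_le)
  also have "card (H - {v}) = card H - 1" using v fin_H by simp
  finally have "s + t - 1 \<le> card H - 1 + card N"
    using deg v H(1) unfolding degree_def by fastforce
  moreover have "1 \<le> card H" using v fin_H by (metis One_nat_def Suc_leI card_gt_0_iff empty_iff)
  ultimately have st: "s + t \<le> card H + card N" by linarith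
  have no_MH: "\<forall>x\<in>M. \<forall>y\<in>M \<union> H. \<not> E x y"
    using M(1,3) sep sym unfolding symp_def by blast
  have MH: "M \<subseteq> V" "M \<inter> H = {}" using M(1) by auto
  consider "s \<le> card N" | "t \<le> card N" | "card N < s" "card N < t" by linarith
  then show ?thesis
  proof cases
    case 1
    then show ?thesis
      using st M(2) H(1) MH fin_H fin_M no_MH by (intro has_bip_holeI_independent[of M H]) auto
  next
    case 2
    then have "has_bip_hole V E t s"
      using st M(2) H(1) MH fin_H fin_M no_MH by (intro has_bip_holeI_independent[of M H]) auto
    then show ?thesis using has_bip_hole_sym[OF sym] by blast
  next
    case 3
    obtain w where w: "w \<in> V - H - N" using N(2) by blast
    have "insert w {u \<in> V. E w u} \<subseteq> V - H"
      using w sep sym unfolding symp_def by blast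
    then have "card (insert w {u \<in> V. E w u}) \<le> card (V - H)"
      using fin by (intro card_mono) auto
    moreover have "card (insert w {u \<in> V. E w u}) = degree V E w + 1"
      using fin irr unfolding degree_def by simp
    ultimately have "s + t \<le> card (V - H)"
      using deg w by fastforce
    moreover have "card (V - H) - card N \<le> card (V - H - N)"
      using fin_N by (rule diff_card_le_card_Diff)
    ultimately have "t \<le> card (V - H - N)"
      using 3 by linarith
    moreover have "s \<le> card H" using st 3 by linarith
    ultimately show ?thesis
      using H(1) sep by (intro has_bip_holeI[of H V "V - H - N"]) auto
  qed
qed

lemma longest_cycle_attachments:
  assumes G: "simple_graph V E" and c: "longest_cycle V E c"
    and H_def: "H = reachable E (V - set c) v"
  obtains N M where "N \<subseteq> set c" "M \<subseteq> set c - N" "card M = card N"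
    "\<forall>x\<in>M. \<forall>y\<in>M. \<not> E x y" "\<forall>x\<in>H. \<forall>y\<in>set c - N. \<not> E x y"
proof -
  have dist: "distinct c" using c unfolding longest_cycle_def by auto
  define I where "I = {i. i < length c \<and> (\<exists>h\<in>H. E h (c ! i))}"
  define N where "N = (\<lambda>i. c ! i) ` I"
  define M where "M = (\<lambda>i. rotate1 c ! i) ` I"
  note succ = longest_cycle_attachment_successors[OF G c, where v = v, folded H_def]
  have M_succ: "rotate1 c ! i = c ! ((i + 1) mod length c)" if "i \<in> I" for i
    using that unfolding I_def by (simp add: nth_rotate1)
  have N: "N \<subseteq> set c" "card N = card I"
    unfolding N_def I_def using dist by (auto intro: card_image inj_on_nth)
  have M: "M \<subseteq> set c" "card M = card I"
    unfolding M_def I_def using dist nth_mem[of _ "rotate1 c"]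
    by (auto intro!: card_image inj_on_nth)
  have "M \<inter> N = {}"
  proof (rule ccontr)
    assume "M \<inter> N \<noteq> {}"
    then obtain i j where ij: "i \<in> I" "j \<in> I" "rotate1 c ! i = c ! j"
      unfolding M_def N_def by blast
    obtain x y where xy: "x \<in> H" "E x (c ! i)" "i < length c" "y \<in> H" "E y (c ! j)"
      using ij(1,2) unfolding I_def by blast
    have "\<not> E y (c ! ((i + 1) mod length c))" using succ(1)[OF xy(1,4,3,2)] .
    then show False using xy(5) ij(3) M_succ[OF ij(1)] by simp
  qed
  then have "M \<subseteq> set c - N" "card M = card N" using M N by auto
  moreover have "\<forall>x\<in>M. \<forall>y\<in>M. \<not> E x y"
  proof (intro ballI)
    fix x y assume "x \<in> M" "y \<in> M"
    then obtain i j where ij: "i \<in> I" "j \<in> I" "x = rotate1 c ! i" "y = rotate1 c ! j"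
      unfolding M_def by blast
    obtain hx hy where h: "hx \<in> H" "E hx (c ! i)" "i < length c" "hy \<in> H" "E hy (c ! j)" "j < length c"
      using ij(1,2) unfolding I_def by blast
    show "\<not> E x y"
      using succ(2)[OF h(1,4,3,2,6,5)] ij(3,4) M_succ[OF ij(1)] M_succ[OF ij(2)] by simp
  qed
  moreover have "\<forall>x\<in>H. \<forall>y\<in>set c - N. \<not> E x y"
  proof (intro ballI notI)
    fix x y assume xy: "x \<in> H" "y \<in> set c - N" "E x y"
    then obtain i where "i < length c" "y = c ! i" by (metis DiffD1 in_set_conv_nth)
    then show False using xy unfolding N_def I_def by blast
  qed
  ultimately show ?thesis using that[of N M] N(1) by blast
qed

lemma longest_cycle_covers:
  assumes G: "simple_graph V E" and no_hole: "\<not> has_bip_hole V E s t"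
    and deg: "\<forall>x\<in>V. s + t - 1 \<le> degree V E x"
    and c: "longest_cycle V E c" "c \<noteq> []"
  shows "set c = V"
proof (rule ccontr)
  assume "set c \<noteq> V"
  then obtain v where v: "v \<in> V - set c" using c(1) unfolding longest_cycle_def by blast
  have cV: "set c \<subseteq> V" using c(1) unfolding longest_cycle_def by auto
  define H where "H = reachable E (V - set c) v"
  obtain N M where NM: "N \<subseteq> set c" "M \<subseteq> set c - N" "card M = card N"
    "\<forall>x\<in>M. \<forall>y\<in>M. \<not> E x y" "\<forall>x\<in>H. \<forall>y\<in>set c - N. \<not> E x y"
    using longest_cycle_attachments[OF G c(1) H_def] by blast
  have H: "H \<subseteq> V - set c" "v \<in> H"
    using reachable_subset[of E "V - set c" v] start_reachable[of v "V - set c" E] v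
    unfolding H_def by auto
  have sep: "\<forall>x\<in>H. \<forall>y\<in>V - H - N. \<not> E x y"
  proof (intro ballI notI)
    fix x y assume xy: "x \<in> H" "y \<in> V - H - N" "E x y"
    show False
    proof (cases "y \<in> set c")
      case True
      then show False using NM(5) xy by blast
    next
      case False
      then show False using xy reachable_step[of x E "V - set c" v y] unfolding H_def by blast
    qed
  qed
  have "set c - N \<noteq> {}"
  proof (cases "N = {}")
    case True
    then show ?thesis using c(2) by simp
  next
    case False
    then have "M \<noteq> {}" using NM(1,3) finite_subset[OF NM(1)] by fastforce
    then show ?thesis using NM(2) by blast
  qed
  then have "V - H - N \<noteq> {}" using cV H(1) by blast
  moreover have "H \<subseteq> V" "H \<noteq> {}" "N \<subseteq> V - H" "M \<subseteq> V - H - N"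
    using H NM(1,2) cV by blast+
  ultimately have "has_bip_hole V E s t"
    using has_bip_hole_around[OF G deg _ _ _ _ sep] NM(3,4) by simp
  then show False using no_hole by blast
qed

lemma longest_path_hd_neighbours:
  assumes "symp E" "walk E V p" "distinct p"
    and longest: "\<And>q. walk E V q \<Longrightarrow> distinct q \<Longrightarrow> length q \<le> length p"
  shows "{u \<in> V. E (hd p) u} \<subseteq> set p"
proof
  fix u assume u: "u \<in> {u \<in> V. E (hd p) u}"
  have "walk E V (u # p) \<Longrightarrow> distinct (u # p) \<Longrightarrow> False"
    using longest[of "u # p"] by simp
  then show "u \<in> set p"
    using u assms(1-3) unfolding walk_def by (auto simp: successively_Cons symp_def)
qed

lemma exists_cycle_length_ge_3:
  assumes G: "simple_graph V E" and deg: "\<forall>v\<in>V. 2 \<le> degree V E v" and "V \<noteq> {}"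
  shows "\<exists>c. cyclically E c \<and> distinct c \<and> set c \<subseteq> V \<and> 3 \<le> length c"
proof -
  have fin: "finite V" and sym: "symp E" and irr: "\<And>x. \<not> E x x"
    using G by (simp_all add: simple_graphD)
  obtain v0 where "v0 \<in> V" using assms(3) by blast
  let ?P = "\<lambda>p. walk E V p \<and> distinct p"
  have "length p < card V + 1" if "?P p" for p
    using that fin card_mono distinct_card unfolding walk_def by (metis less_Suc_eq_le Suc_eq_plus1)
  moreover have "?P [v0]" using \<open>v0 \<in> V\<close> unfolding walk_def by simp
  ultimately obtain p where p: "?P p" and longest: "\<And>q. ?P q \<Longrightarrow> length q \<le> length p"
    using Lattices_Big.ex_has_greatest_nat[of ?P "[v0]" length] by blast
  have p_ne: "p \<noteq> []" and pV: "set p \<subseteq> V" and p_succ: "successively E p"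
    using p unfolding walk_def by auto
  define x where "x = hd p"
  have x: "x = p ! 0" "x \<in> V" using p_ne pV unfolding x_def by (auto simp: hd_conv_nth)
  have nbrs: "{u \<in> V. E x u} \<subseteq> set p"
    unfolding x_def using longest_path_hd_neighbours[OF sym] p longest by blast
  have "2 \<le> card {u \<in> V. E x u}" using deg x(2) unfolding degree_def by blast
  then obtain u where u: "u \<in> V" "E x u" "u \<noteq> p ! 1"
    by (metis (mono_tags, lifting) card_le_Suc0_iff_eq fin finite_subset mem_Collect_eq
        not_less_eq_eq numeral_2_eq_2 subsetI)
  obtain j where j: "j < length p" "p ! j = u" using nbrs u by (metis in_set_conv_nth mem_Collect_eq subsetD)
  have "j \<noteq> 0"
  proof
    assume "j = 0"
    then show False using j u(2) x(1) irr by simp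
  qed
  moreover have "j \<noteq> 1" using j u(3) by auto
  ultimately have "2 \<le> j" by simp
  define c where "c = take (j + 1) p"
  have "c \<noteq> []" "hd c = x"
    using p_ne unfolding c_def x_def by (cases p; simp)+
  moreover have "last c = u"
    using j unfolding c_def by (simp add: take_Suc_conv_app_nth)
  moreover have "successively E c"
    using p_succ unfolding c_def by (metis append_take_drop_id successively_append_iff)
  ultimately have "cyclically E c"
    using u(2) sym by (simp add: cyclically_iff_successively symp_def)
  moreover have "distinct c" "set c \<subseteq> V" "3 \<le> length c"
    using p pV j \<open>2 \<le> j\<close> unfolding c_def by (auto dest: in_set_takeD)
  ultimately show ?thesis by blast
qed

lemma degree_if_no_bip_hole_1_1:
  assumes G: "simple_graph V E" and no_hole: "\<not> has_bip_hole V E 1 1" and v: "v \<in> V"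
  shows "degree V E v = card V - 1"
proof -
  have "{u \<in> V. E v u} = V - {v}"
  proof
    show "{u \<in> V. E v u} \<subseteq> V - {v}" using G by (auto simp: simple_graphD)
    show "V - {v} \<subseteq> {u \<in> V. E v u}"
    proof
      fix u assume u: "u \<in> V - {v}"
      have "E v u"
      proof (rule ccontr)
        assume "\<not> E v u"
        then have "has_bip_hole V E 1 1"
          using u v by (intro has_bip_holeI[of "{v}" V "{u}"]) auto
        then show False using no_hole by blast
      qed
      then show "u \<in> {u \<in> V. E v u}" using u by blast
    qed
  qed
  then show ?thesis using G v unfolding degree_def by (simp add: simple_graphD)
qed

lemma hamilton_cycle_if_no_bip_hole:
  assumes G: "simple_graph V E" and "3 \<le> card V" and st: "1 \<le> s" "1 \<le> t"
    and no_hole: "\<not> has_bip_hole V E s t" and deg: "\<forall>x\<in>V. s + t - 1 \<le> degree V E x"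
  shows "\<exists>xs. hamilton_cycle V E xs"
proof -
  have "2 \<le> degree V E x" if "x \<in> V" for x
  proof (cases "s = 1 \<and> t = 1")
    case True
    then show ?thesis using degree_if_no_bip_hole_1_1[OF G] no_hole that \<open>3 \<le> card V\<close> by simp
  next
    case False
    then show ?thesis using deg that st by fastforce
  qed
  then obtain c0 where c0: "cyclically E c0" "distinct c0" "set c0 \<subseteq> V" "3 \<le> length c0"
    using exists_cycle_length_ge_3[OF G] \<open>3 \<le> card V\<close> by fastforce
  obtain c where c: "longest_cycle V E c"
    using longest_cycle_exists G by (blast dest: simple_graphD)
  have "3 \<le> length c" using c c0 unfolding longest_cycle_def by fastforce
  then have "c \<noteq> []" by auto
  then have "set c = V" by (rule longest_cycle_covers[OF G no_hole deg c])
  then show ?thesis using c \<open>3 \<le> length c\<close> unfolding hamilton_cycle_iff longest_cycle_def by blast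
qed

lemma bip_hole_number_attained:
  assumes "finite V"
  obtains s t where "1 \<le> s" "1 \<le> t" "bip_hole_number V E = s + t - 1" "\<not> has_bip_hole V E s t"
proof -
  have no_hole: "\<not> has_bip_hole V E (card V + 1) 1"
  proof
    assume "has_bip_hole V E (card V + 1) 1"
    then obtain S where "S \<subseteq> V" "card S = card V + 1"
      unfolding has_bip_hole_def by blast
    then show False using card_mono[OF assms, of S] by simp
  qed
  have "\<exists>s t. 1 \<le> s \<and> 1 \<le> t \<and> card V + 1 = s + t - 1 \<and> \<not> has_bip_hole V E s t"
    using no_hole by (intro exI[of _ "card V + 1"] exI[of _ 1]) simp
  then have "\<exists>s t. 1 \<le> s \<and> 1 \<le> t \<and> bip_hole_number V E = s + t - 1 \<and> \<not> has_bip_hole V E s t"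
    unfolding bip_hole_number_def by (rule LeastI)
  then show ?thesis using that by blast
qed

lemma bip_hole_number_le:
  "1 \<le> s \<Longrightarrow> 1 \<le> t \<Longrightarrow> \<not> has_bip_hole V E s t \<Longrightarrow> bip_hole_number V E \<le> s + t - 1"
  unfolding bip_hole_number_def by (rule Least_le) blast

theorem hamilton_cycle_if_bip_hole_number_le_degree:
  assumes G: "simple_graph V E" and "3 \<le> card V"
    and deg: "\<forall>x\<in>V. bip_hole_number V E \<le> degree V E x"
  shows "\<exists>xs. hamilton_cycle V E xs"
proof -
  obtain s t where st: "1 \<le> s" "1 \<le> t" "bip_hole_number V E = s + t - 1" "\<not> has_bip_hole V E s t"
    using bip_hole_number_attained simple_graphD(1)[OF G] by blast
  have "\<forall>x\<in>V. s + t - 1 \<le> degree V E x" using deg st(3) by simp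
  then show ?thesis by (rule hamilton_cycle_if_no_bip_hole[OF G \<open>3 \<le> card V\<close> st(1,2,4)])
qed

lemma min_degree_le_degree: "finite V \<Longrightarrow> v \<in> V \<Longrightarrow> min_degree V E \<le> degree V E v"
  unfolding min_degree_def by simp

definition delete_edges :: "('a \<Rightarrow> 'a \<Rightarrow> bool) \<Rightarrow> 'a set set \<Rightarrow> 'a \<Rightarrow> 'a \<Rightarrow> bool" where
  "delete_edges E F x y \<longleftrightarrow> E x y \<and> {x, y} \<notin> F"

lemma simple_graph_delete_edges: "simple_graph V E \<Longrightarrow> simple_graph V (delete_edges E F)"
  unfolding simple_graph_def delete_edges_def by (auto simp: insert_commute)

lemma degree_le_degree_delete_edges:
  assumes "finite V" "finite {u. {v, u} \<in> F}"
  shows "degree V E v \<le> degree V (delete_edges E F) v + card {u. {v, u} \<in> F}"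
proof -
  have "{u \<in> V. E v u} \<subseteq> {u \<in> V. delete_edges E F v u} \<union> {u. {v, u} \<in> F}"
    unfolding delete_edges_def by blast
  then have "card {u \<in> V. E v u} \<le> card ({u \<in> V. delete_edges E F v u} \<union> {u. {v, u} \<in> F})"
    using assms by (intro card_mono) auto
  then show ?thesis unfolding degree_def using card_Un_le le_trans by blast
qed

lemma no_bip_hole_delete_edges:
  assumes "finite V" and F: "\<And>v. finite {u. {v, u} \<in> F}" "\<And>v. card {u. {v, u} \<in> F} \<le> d"
    and no_hole: "\<not> has_bip_hole V E s t"
  shows "\<not> has_bip_hole V (delete_edges E F) s (t + d * s)"
proof
  assume "has_bip_hole V (delete_edges E F) s (t + d * s)"
  then obtain S T where ST: "S \<subseteq> V" "T \<subseteq> V" "S \<inter> T = {}" "card S = s" "card T = t + d * s"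
    "\<forall>x\<in>S. \<forall>y\<in>T. \<not> delete_edges E F x y"
    unfolding has_bip_hole_def by blast
  define U where "U = (\<Union>x\<in>S. {u. {x, u} \<in> F})"
  have fin_S: "finite S" using ST(1) assms(1) finite_subset by blast
  have "card U \<le> (\<Sum>x\<in>S. card {u. {x, u} \<in> F})"
    unfolding U_def using fin_S by (rule card_UN_le)
  also have "\<dots> \<le> d * s" using sum_mono[of S _ "\<lambda>_. d"] F(2) ST(4) by (simp add: mult.commute)
  finally have "t \<le> card (T - U)"
    using ST(5) diff_card_le_card_Diff[of U T] fin_S F(1) unfolding U_def by fastforce
  moreover have "\<forall>x\<in>S. \<forall>y\<in>T - U. \<not> E x y"
    using ST(6) unfolding U_def delete_edges_def by blast
  ultimately have "has_bip_hole V E s t"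
    using ST by (intro has_bip_holeI[of S V "T - U"]) auto
  then show False using no_hole by blast
qed

lemma hamilton_cycle_delete_edges:
  assumes "hamilton_cycle V (delete_edges E F) xs"
  shows "hamilton_cycle V E xs" and "cycle_edges xs \<inter> F = {}"
  using assms unfolding hamilton_cycle_def delete_edges_def cycle_edges_def by auto

lemma finite_cycle_edge_neighbours: "finite {u. {v, u} \<in> cycle_edges xs}"
proof (rule finite_subset)
  show "{u. {v, u} \<in> cycle_edges xs} \<subseteq> set xs"
  proof
    fix u assume "u \<in> {u. {v, u} \<in> cycle_edges xs}"
    then obtain i where i: "i < length xs" "{v, u} = {xs ! i, xs ! ((i + 1) mod length xs)}"
      unfolding cycle_edges_def by blast
    then have "(i + 1) mod length xs < length xs" by (cases xs) auto
    then show "u \<in> set xs" using i nth_mem by (auto simp: doubleton_eq_iff)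
  qed
qed simp

lemma card_cycle_edge_neighbours:
  assumes "distinct xs"
  shows "card {u. {v, u} \<in> cycle_edges xs} \<le> 2"
proof -
  define ys where "ys = rotate1 xs"
  have ys: "distinct ys" "length ys = length xs" using assms unfolding ys_def by auto
  have at_most_one: "card {i. i < length zs \<and> zs ! i = v} \<le> 1" if "distinct zs" for zs :: "'a list"
    unfolding One_nat_def using that by (subst card_le_Suc0_iff_eq) (auto simp: nth_eq_iff_index_eq)
  have "cycle_edges xs = {{xs ! i, ys ! i} | i. i < length xs}"
    unfolding cycle_edges_def ys_def by (metis nth_rotate1 Suc_eq_plus1)
  then have "{u. {v, u} \<in> cycle_edges xs} \<subseteq>
      (\<lambda>i. ys ! i) ` {i. i < length xs \<and> xs ! i = v} \<union> (\<lambda>i. xs ! i) ` {i. i < length ys \<and> ys ! i = v}"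
    using ys(2) by (auto simp: doubleton_eq_iff)
  then have "card {u. {v, u} \<in> cycle_edges xs} \<le>
      card ((\<lambda>i. ys ! i) ` {i. i < length xs \<and> xs ! i = v} \<union> (\<lambda>i. xs ! i) ` {i. i < length ys \<and> ys ! i = v})"
    by (intro card_mono) auto
  also have "\<dots> \<le> card {i. i < length xs \<and> xs ! i = v} + card {i. i < length ys \<and> ys ! i = v}"
    by (intro card_Un_le[THEN le_trans] add_mono card_image_le) auto
  also have "\<dots> \<le> 2" using at_most_one[OF assms] at_most_one[OF ys(1)] by simp
  finally show ?thesis .
qed

lemma card_UN_cycle_edge_neighbours:
  assumes "\<forall>i<k. distinct (C i)"
  shows "finite {u. {v, u} \<in> (\<Union>i<k. cycle_edges (C i))}"
    and "card {u. {v, u} \<in> (\<Union>i<k. cycle_edges (C i))} \<le> 2 * k"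
proof -
  have eq: "{u. {v, u} \<in> (\<Union>i<k. cycle_edges (C i))} = (\<Union>i<k. {u. {v, u} \<in> cycle_edges (C i)})"
    by blast
  show "finite {u. {v, u} \<in> (\<Union>i<k. cycle_edges (C i))}"
    unfolding eq by (simp add: finite_cycle_edge_neighbours)
  have "card (\<Union>i<k. {u. {v, u} \<in> cycle_edges (C i)}) \<le> (\<Sum>i<k. card {u. {v, u} \<in> cycle_edges (C i)})"
    by (rule card_UN_le) simp
  also have "\<dots> \<le> (\<Sum>i<k. 2)"
    using assms by (intro sum_mono card_cycle_edge_neighbours) auto
  finally show "card {u. {v, u} \<in> (\<Union>i<k. cycle_edges (C i))} \<le> 2 * k"
    unfolding eq by simp
qed

lemma hamilton_cycle_avoiding:
  fixes C :: "nat \<Rightarrow> 'a list"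
  assumes G: "simple_graph V E" and "3 \<le> card V"
    and md: "(r + 1) * bip_hole_number V E + 3 * r \<le> min_degree V E"
    and "k \<le> r" and C: "\<forall>i<k. hamilton_cycle V E (C i)"
  shows "\<exists>xs. hamilton_cycle V E xs \<and> (\<forall>i<k. cycle_edges xs \<inter> cycle_edges (C i) = {})"
proof -
  define F where "F = (\<Union>i<k. cycle_edges (C i))"
  have fin: "finite V" and sym: "symp E" using G by (simp_all add: simple_graphD)
  have "\<forall>i<k. distinct (C i)" using C unfolding hamilton_cycle_def by blast
  note F = card_UN_cycle_edge_neighbours[OF this, folded F_def]
  obtain s0 t0 where st0: "1 \<le> s0" "1 \<le> t0" "bip_hole_number V E = s0 + t0 - 1"
    "\<not> has_bip_hole V E s0 t0"
    using bip_hole_number_attained[OF fin] by blast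
  obtain s t where st: "1 \<le> s" "1 \<le> t" "bip_hole_number V E = s + t - 1"
    "\<not> has_bip_hole V E s t" "s \<le> t"
    using st0 has_bip_hole_sym[OF sym] by (metis add.commute nat_le_linear)
  define a where "a = bip_hole_number V E"
  have a: "a = s + t - 1" using st(3) unfolding a_def .
  have "bip_hole_number V (delete_edges E F) \<le> s + (t + 2 * k * s) - 1"
    using bip_hole_number_le[OF _ _ no_bip_hole_delete_edges[OF fin F st(4)]] st(1,2) by simp
  also have "\<dots> \<le> (k + 1) * a + k"
  proof -
    have "2 * s \<le> a + 1" using st(1,5) unfolding a by simp
    then have "k * (2 * s) \<le> k * (a + 1)" by (rule mult_left_mono) simp
    have "s + (t + 2 * k * s) - 1 = a + k * (2 * s)" using st(1) unfolding a by simp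
    also have "\<dots> \<le> a + k * (a + 1)" using \<open>k * (2 * s) \<le> k * (a + 1)\<close> by simp
    also have "\<dots> = (k + 1) * a + k" by (simp add: algebra_simps)
    finally show ?thesis .
  qed
  also have "\<dots> \<le> degree V (delete_edges E F) x" if "x \<in> V" for x
  proof -
    have "(k + 1) * a \<le> (r + 1) * a" using \<open>k \<le> r\<close> by simp
    moreover have "(r + 1) * a + 3 * r \<le> degree V E x"
      using md min_degree_le_degree[OF fin that, of E] unfolding a_def by linarith
    moreover have "degree V E x \<le> degree V (delete_edges E F) x + 2 * k"
      using degree_le_degree_delete_edges[OF fin F(1)] F(2) by (meson add_left_mono le_trans)
    ultimately show ?thesis using \<open>k \<le> r\<close> by linarith
  qed
  finally obtain xs where "hamilton_cycle V (delete_edges E F) xs"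
    using hamilton_cycle_if_bip_hole_number_le_degree[OF simple_graph_delete_edges[OF G] \<open>3 \<le> card V\<close>]
    by blast
  then show ?thesis using hamilton_cycle_delete_edges unfolding F_def by blast
qed

lemma edge_disjoint_hamilton_cycles:
  assumes G: "simple_graph V E" and "3 \<le> card V"
    and md: "(r + 1) * bip_hole_number V E + 3 * r \<le> min_degree V E" and "k \<le> r + 1"
  shows "\<exists>C :: nat \<Rightarrow> 'a list. (\<forall>i<k. hamilton_cycle V E (C i)) \<and>
           (\<forall>i<k. \<forall>j<k. i \<noteq> j \<longrightarrow> cycle_edges (C i) \<inter> cycle_edges (C j) = {})"
  using \<open>k \<le> r + 1\<close>
proof (induction k)
  case 0
  then show ?case by simp
next
  case (Suc k)
  then obtain C :: "nat \<Rightarrow> 'a list" where C: "\<forall>i<k. hamilton_cycle V E (C i)"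
    "\<forall>i<k. \<forall>j<k. i \<noteq> j \<longrightarrow> cycle_edges (C i) \<inter> cycle_edges (C j) = {}"
    by auto
  obtain xs where xs: "hamilton_cycle V E xs" "\<forall>i<k. cycle_edges xs \<inter> cycle_edges (C i) = {}"
    using hamilton_cycle_avoiding[OF G \<open>3 \<le> card V\<close> md _ C(1)] Suc(2) by auto
  have "\<forall>i<Suc k. hamilton_cycle V E ((C(k := xs)) i)"
    using C(1) xs(1) by (simp add: less_Suc_eq)
  moreover have "\<forall>i<Suc k. \<forall>j<Suc k. i \<noteq> j \<longrightarrow>
      cycle_edges ((C(k := xs)) i) \<inter> cycle_edges ((C(k := xs)) j) = {}"
    using C(2) xs(2) by (auto simp: less_Suc_eq)
  ultimately show ?case by blast
qed

theorem theorem3: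
  fixes V :: "'a set" and E :: "'a \<Rightarrow> 'a \<Rightarrow> bool" and r :: nat
  assumes "simple_graph V E"
    and "card V \<ge> 3"
    and "min_degree V E \<ge> (r + 1) * bip_hole_number V E + 3 * r"
  shows "\<exists>C :: nat \<Rightarrow> 'a list.
           (\<forall>i \<le> r. hamilton_cycle V E (C i)) \<and>
           (\<forall>i \<le> r. \<forall>j \<le> r. i \<noteq> j \<longrightarrow> cycle_edges (C i) \<inter> cycle_edges (C j) = {})"
  using edge_disjoint_hamilton_cycles[OF assms order.refl] by (simp add: less_Suc_eq_le)

end
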